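(* Let $c_k\in(0,1)$ and $l_k>0$ with $l_k\to0$, let $I_k$ be the open interval of length $l_k$ centered at $c_k$, and let $S=\bigcap_{m\ge1}\bigcup_{k\ge m}I_k$. If $S$ is re-distributable, then $\mathrm{Cap}(S)=\mathrm{Cap}([0,1])$.
   Context: Interaction: $I(\nu,\mu)=\iint(-\log|z-w|)\,d\nu(z)\,d\mu(w)$, energy $I(\mu)=I(\mu,\mu)$; capacity $\mathrm{Cap}(E)=\exp(-\inf I(\mu))$, infimum over Borel probability measures with compact support contained in $E$ ($e^{-\infty}=0$). $S$ is called re-distributable if: for every probability measure $\nu$ with piecewise continuous density supported on a finite collection of intervals in $[0,1]$, every $\varepsilon>0$ and every $m\in\mathbb{N}$, there is a probability measure $\nu'$ with piecewise continuous density such that (1) $I(\nu')<I(\nu)+\varepsilon$ and (2) $\nu'$ is supported on $\mathrm{supp}\,\nu\cap V_n$ for some $n\ge m$, where $V_n$ is a finite union of intervals $I_k$ with $k\ge n$. *)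

theory Defs
  imports "HOL-Probability.Probability"
begin

definition measure_support :: "real measure \<Rightarrow> real set" where
  "measure_support M = {x. \<forall>e>0. emeasure M (ball x e) > 0}"

definition log_kernel_pos :: "real \<Rightarrow> real \<Rightarrow> ennreal" where
  "log_kernel_pos z w = (if z = w then \<infinity> else ennreal (max 0 (- ln \<bar>z - w\<bar>)))"

definition log_kernel_neg :: "real \<Rightarrow> real \<Rightarrow> ennreal" where
  "log_kernel_neg z w = (if z = w then 0 else ennreal (max 0 (ln \<bar>z - w\<bar>)))"

definition log_interaction :: "real measure \<Rightarrow> real measure \<Rightarrow> ereal" where
  "log_interaction \<nu> \<mu> =
     enn2ereal (\<integral>\<^sup>+ z. (\<integral>\<^sup>+ w. log_kernel_pos z w \<partial>\<mu>) \<partial>\<nu>)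
   - enn2ereal (\<integral>\<^sup>+ z. (\<integral>\<^sup>+ w. log_kernel_neg z w \<partial>\<mu>) \<partial>\<nu>)"

definition log_energy :: "real measure \<Rightarrow> ereal" where
  "log_energy \<mu> = log_interaction \<mu> \<mu>"

definition admissible_measures :: "real set \<Rightarrow> real measure set" where
  "admissible_measures E = {\<mu>. prob_space \<mu> \<and> sets \<mu> = sets borel \<and>
       compact (measure_support \<mu>) \<and> measure_support \<mu> \<subseteq> E}"

definition log_capacity :: "real set \<Rightarrow> ereal" where
  "log_capacity E =
     (case (INF \<mu> \<in> admissible_measures E. log_energy \<mu>) of
        ereal r \<Rightarrow> ereal (exp (- r))
      | PInfty \<Rightarrow> 0
      | MInfty \<Rightarrow> PInfty)"

definition piecewise_continuous :: "(real \<Rightarrow> real) \<Rightarrow> bool" where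
  "piecewise_continuous f \<longleftrightarrow> (\<exists>P. finite P \<and> continuous_on (- P) f \<and>
      (\<forall>p\<in>P. (\<exists>a. (f \<longlongrightarrow> a) (at_left p)) \<and> (\<exists>b. (f \<longlongrightarrow> b) (at_right p))))"

definition has_pc_density :: "real measure \<Rightarrow> bool" where
  "has_pc_density \<nu> \<longleftrightarrow> (\<exists>f. (\<forall>x. 0 \<le> f x) \<and> f \<in> borel_measurable borel \<and>
      piecewise_continuous f \<and> \<nu> = density lborel (\<lambda>x. ennreal (f x)))"

definition redistributable :: "(nat \<Rightarrow> real set) \<Rightarrow> bool" where
  "redistributable I \<longleftrightarrow>
    (\<forall>\<nu> \<epsilon> m. prob_space \<nu> \<and> has_pc_density \<nu> \<and>
        (\<exists>F. finite F \<and> (\<forall>A\<in>F. is_interval A \<and> A \<subseteq> {0..1}) \<and> measure_support \<nu> \<subseteq> \<Union>F)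
        \<and> \<epsilon> > 0 \<and> m \<ge> 1 \<longrightarrow>
      (\<exists>\<nu>'. prob_space \<nu>' \<and> has_pc_density \<nu>' \<and>
          log_energy \<nu>' < log_energy \<nu> + ereal \<epsilon> \<and>
          (\<exists>n\<ge>m. \<exists>K. finite K \<and> K \<subseteq> {n..} \<and>
              measure_support \<nu>' \<subseteq> measure_support \<nu> \<inter> (\<Union>k\<in>K. I k))))"

end

theory Submission
  imports Defs
begin

text \<open>Since \<open>S \<subseteq> [0, 1]\<close> and the kernel \<open>-log|z - w|\<close> is nonnegative there, it suffices to
  approximate the energy of any admissible \<open>\<mu>\<close> on \<open>[0, 1]\<close> by measures supported on \<open>S\<close>.
  First \<open>\<mu>\<close> is replaced by a histogram on a fine uniform grid: its energy is the
  \<open>\<mu> \<otimes> \<mu>\<close>-integral of the kernel averaged over pairs of grid cells, and these averages are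
  dominated by the kernel plus a constant and converge to it off the diagonal, so reverse Fatou
  applies. The histogram has a piecewise continuous density, so re-distributing it again and
  again with errors \<open>\<delta> / 2 ^ (j + 1)\<close> yields measures with nested supports, the \<open>j\<close>-th inside
  \<open>\<Union>k\<ge>j. I k\<close>. They live on \<open>[0, 1]\<close>, hence are tight; a weak limit point is supported in all
  of their supports, hence in \<open>S\<close>, and by Skorohod's theorem and Fatou's lemma its energy is at
  most the limit inferior of theirs.\<close>

section \<open>Supports of Borel measures on the line\<close>

lemma closed_measure_support:
  assumes "sets M = sets borel"
  shows "closed (measure_support M)"
  unfolding closed_def open_dist
proof safe
  fix x assume "x \<notin> measure_support M"
  then obtain e where e: "e > 0" "emeasure M (ball x e) = 0"
    unfolding measure_support_def by (auto simp: not_less)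
  show "\<exists>d>0. \<forall>y. dist y x < d \<longrightarrow> y \<in> - measure_support M"
  proof (intro exI[of _ "e/2"] conjI allI impI)
    fix y assume "dist y x < e/2"
    then have "ball y (e/2) \<subseteq> ball x e"
      using dist_triangle_half_r[of y x e] by auto
    then have "emeasure M (ball y (e/2)) \<le> emeasure M (ball x e)"
      using assms by (intro emeasure_mono) auto
    then have "emeasure M (ball y (e/2)) = 0"
      using e by simp
    then show "y \<in> - measure_support M"
      using e unfolding measure_support_def by (auto intro!: exI[of _ "e/2"])
  qed (use e in auto)
qed

text \<open>The complement of the support is covered by countably many null balls with rational
  centres and radii.\<close>
lemma AE_in_measure_support:
  assumes sM: "sets M = sets borel"
  shows "AE x in M. x \<in> measure_support M"
proof -
  define Q where "Q = {(q, r). q \<in> \<rat> \<and> r \<in> \<rat> \<and> emeasure M (ball q r) = 0}"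
  have "countable Q"
    by (rule countable_subset[of _ "\<rat> \<times> \<rat>"]) (auto simp: Q_def intro: countable_SIGMA countable_rat)
  then have null: "(\<Union>(q, r)\<in>Q. ball q r) \<in> null_sets M"
    by (rule null_sets_UN') (auto simp: Q_def null_sets_def sM)
  show ?thesis
  proof (rule AE_I'[OF null], safe)
    fix x assume "x \<notin> measure_support M"
    then obtain e where e: "e > 0" "emeasure M (ball x e) = 0"
      unfolding measure_support_def by (auto simp: not_less)
    obtain q where q: "q \<in> \<rat>" "x - e/3 < q" "q < x + e/3"
      using Rats_dense_in_real[of "x - e/3" "x + e/3"] e by auto
    obtain r where r: "r \<in> \<rat>" "e/3 < r" "r < 2*e/3"
      using Rats_dense_in_real[of "e/3" "2*e/3"] e by auto
    have "ball q r \<subseteq> ball x e"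
      using q r by (auto simp: dist_real_def)
    then have "emeasure M (ball q r) \<le> emeasure M (ball x e)"
      using sM by (intro emeasure_mono) auto
    then have "emeasure M (ball q r) = 0"
      using e by simp
    then have "(q, r) \<in> Q" using q r by (simp add: Q_def)
    moreover have "x \<in> ball q r" using q r by (simp add: dist_real_def)
    ultimately show "x \<in> (\<Union>(q, r)\<in>Q. ball q r)" by blast
  qed
qed

lemma AE_measure_support_subset:
  assumes "sets M = sets borel" "measure_support M \<subseteq> A"
  shows "AE x in M. x \<in> A"
  using AE_in_measure_support[OF assms(1)] by eventually_elim (use assms(2) in auto)

lemma emeasure_eq_0_if_disjoint_measure_support:
  assumes sM: "sets M = sets borel" and "U \<in> sets borel" "U \<inter> measure_support M = {}"
  shows "emeasure M U = 0"
proof -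
  have "AE x in M. x \<notin> U"
    using AE_in_measure_support[OF sM] by eventually_elim (use assms in auto)
  then show ?thesis
    using assms by (subst AE_iff_measurable[symmetric]) (auto simp: sets_eq_imp_space_eq)
qed

lemma measure_support_density_subset:
  assumes f: "f \<in> borel_measurable borel" and zero: "\<And>x. x \<notin> A \<Longrightarrow> f x = 0" and "closed A"
  shows "measure_support (density lborel f) \<subseteq> A"
proof
  fix x assume x: "x \<in> measure_support (density lborel f)"
  show "x \<in> A"
  proof (rule ccontr)
    assume "x \<notin> A"
    moreover have "open (- A)" using \<open>closed A\<close> by (simp add: open_Compl)
    ultimately obtain e where e: "e > 0" "ball x e \<subseteq> - A"
      using open_contains_ball by blast
    have "emeasure (density lborel f) (ball x e) = (\<integral>\<^sup>+y. f y * indicator (ball x e) y \<partial>lborel)"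
      using f by (intro emeasure_density) auto
    also have "\<dots> = 0"
    proof (rule nn_integral_zero')
      have "f y * indicator (ball x e) y = 0" for y
        using e zero[of y] by (cases "y \<in> ball x e") auto
      then show "AE y in lborel. f y * indicator (ball x e) y = 0" by simp
    qed
    finally show False using x e unfolding measure_support_def by auto
  qed
qed

section \<open>The logarithmic kernel\<close>

lemma borel_measurable_log_kernel_pos[measurable]:
  "(\<lambda>p. log_kernel_pos (fst p) (snd p)) \<in> borel_measurable (borel \<Otimes>\<^sub>M borel)"
  unfolding log_kernel_pos_def by measurable

lemma measurable_log_kernel_pos_comp[measurable (raw)]:
  assumes [measurable]: "f \<in> borel_measurable M" "g \<in> borel_measurable M"
  shows "(\<lambda>x. log_kernel_pos (f x) (g x)) \<in> borel_measurable M"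
  using measurable_comp[of "\<lambda>x. (f x, g x)" M "borel \<Otimes>\<^sub>M borel", OF _ borel_measurable_log_kernel_pos]
  by (simp add: comp_def)

lemma borel_measurable_log_kernel_pos_pair_measure:
  assumes "sets M = sets borel" "sets N = sets borel"
  shows "(\<lambda>p. log_kernel_pos (fst p) (snd p)) \<in> borel_measurable (M \<Otimes>\<^sub>M N)"
  using borel_measurable_log_kernel_pos
  by (subst measurable_cong_sets[OF sets_pair_measure_cong[OF assms] refl])

lemma log_kernel_neg_eq_0:
  assumes "\<bar>z - w\<bar> \<le> 1"
  shows "log_kernel_neg z w = 0"
  using assms by (simp add: log_kernel_neg_def max_def)

lemma tendsto_log_kernel_pos:
  fixes a b :: "nat \<Rightarrow> real"
  assumes a: "a \<longlonglongrightarrow> a0" and b: "b \<longlonglongrightarrow> b0"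
  shows "(\<lambda>n. log_kernel_pos (a n) (b n)) \<longlonglongrightarrow> log_kernel_pos a0 b0"
proof (cases "a0 = b0")
  case False
  have "(\<lambda>n. a n - b n) \<longlonglongrightarrow> a0 - b0" by (intro tendsto_diff a b)
  from tendsto_imp_eventually_ne[OF this, of 0] False
  have "eventually (\<lambda>n. a n \<noteq> b n) sequentially" by simp
  then have "eventually (\<lambda>n. ennreal (max 0 (- ln \<bar>a n - b n\<bar>)) = log_kernel_pos (a n) (b n)) sequentially"
    by eventually_elim (simp add: log_kernel_pos_def)
  moreover have "(\<lambda>n. ennreal (max 0 (- ln \<bar>a n - b n\<bar>))) \<longlonglongrightarrow> ennreal (max 0 (- ln \<bar>a0 - b0\<bar>))"
    using False by (intro tendsto_intros a b) auto
  ultimately show ?thesis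
    using False by (simp add: Lim_transform_eventually log_kernel_pos_def)
next
  case True
  have d: "(\<lambda>n. a n - b n) \<longlonglongrightarrow> 0" using tendsto_diff[OF a b] True by simp
  have "(\<lambda>n. log_kernel_pos (a n) (b n)) \<longlonglongrightarrow> \<infinity>"
  proof (rule order_tendstoI)
    fix y :: ennreal assume "y < \<infinity>"
    then obtain r where r: "r \<ge> 0" "y = ennreal r" using less_top_ennreal by auto
    have "eventually (\<lambda>n. \<bar>a n - b n\<bar> < exp (- (r + 1))) sequentially"
      using tendstoD[OF d, of "exp (- (r + 1))"] by (simp add: dist_norm)
    then show "eventually (\<lambda>n. y < log_kernel_pos (a n) (b n)) sequentially"
    proof eventually_elim
      case (elim n)
      show ?case
      proof (cases "a n = b n")
        case False
        then have "ln \<bar>a n - b n\<bar> < ln (exp (- (r + 1)))"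
          using elim by (subst ln_less_cancel_iff) auto
        then show ?thesis using False r by (simp add: log_kernel_pos_def ennreal_less_iff)
      qed (use r in \<open>simp add: log_kernel_pos_def\<close>)
    qed
  qed simp
  then show ?thesis using True by (simp add: log_kernel_pos_def)
qed

lemma log_kernel_pos_le_scaled:
  assumes s: "s \<ge> 1"
  shows "log_kernel_pos z w \<le> ennreal (ln s) + log_kernel_pos 0 (s * w - s * z)"
proof (cases "z = w")
  case False
  have "\<bar>0 - (s * w - s * z)\<bar> = s * \<bar>z - w\<bar>"
    using s by (simp add: abs_mult right_diff_distrib[symmetric] abs_minus_commute)
  then have eq: "ln \<bar>0 - (s * w - s * z)\<bar> = ln s + ln \<bar>z - w\<bar>"
    using s False by (simp add: ln_mult)
  have "max 0 (- ln \<bar>z - w\<bar>) \<le> ln s + max 0 (- ln \<bar>0 - (s * w - s * z)\<bar>)"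
    unfolding eq using s by simp
  then have "ennreal (max 0 (- ln \<bar>z - w\<bar>)) \<le> ennreal (ln s + max 0 (- ln \<bar>0 - (s * w - s * z)\<bar>))"
    by (rule ennreal_leI)
  also have "\<dots> = ennreal (ln s) + ennreal (max 0 (- ln \<bar>0 - (s * w - s * z)\<bar>))"
    using s by (intro ennreal_plus) auto
  finally show ?thesis
    using False s by (simp add: log_kernel_pos_def)
qed (simp add: log_kernel_pos_def)

lemma minus_ln_le_powr_minus_half:
  fixes x :: real
  assumes x: "0 < x" "x \<le> 1"
  shows "- ln x \<le> x powr (-1/2)"
proof -
  define y where "y = x powr (-1/4)"
  have "y > 0" using x by (simp add: y_def)
  then have "ln y \<le> y - 1" by (rule ln_le_minus_one)
  moreover have "ln y = -1/4 * ln x" using x by (simp add: y_def ln_powr)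
  ultimately have "- ln x \<le> 4 * y - 4" by simp
  also have "\<dots> \<le> y * y" using sum_squares_ge_zero[of "y - 2" 0] by (simp add: algebra_simps power2_eq_square)
  also have "y * y = x powr (-1/2)" using x by (simp add: y_def powr_add[symmetric])
  finally show ?thesis .
qed

definition log_kernel_pos_integral :: ennreal where
  "log_kernel_pos_integral = (\<integral>\<^sup>+t. log_kernel_pos 0 t \<partial>lborel)"

lemma log_kernel_pos_integral_finite: "log_kernel_pos_integral < \<infinity>"
proof -
  define g where "g t = (if t \<in> {0..1} then t powr (-1/2) else 0)" for t :: real
  have g_meas[measurable]: "g \<in> borel_measurable borel" unfolding g_def by measurable
  have "((\<lambda>x::real. x powr (-1/2)) has_integral (1 powr (-1/2+1) / (-1/2+1))) {0..1}"
    by (rule has_integral_powr_from_0) auto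
  then have "(g has_integral 2) UNIV" unfolding g_def has_integral_restrict_UNIV by simp
  then have g_int: "(\<integral>\<^sup>+t. ennreal (g t) \<partial>lborel) = 2"
    using nn_integral_has_integral_lborel[OF g_meas] by (simp add: g_def)
  have "log_kernel_pos_integral \<le> (\<integral>\<^sup>+t. ennreal (g t) + ennreal (g (-t)) \<partial>lborel)"
    unfolding log_kernel_pos_integral_def
  proof (rule nn_integral_mono_AE)
    show "AE t in lborel. log_kernel_pos 0 t \<le> ennreal (g t) + ennreal (g (-t))"
      using AE_lborel_singleton[of 0]
    proof eventually_elim
      case (elim t)
      show ?case
      proof (cases "\<bar>t\<bar> \<le> 1")
        case True
        have "- ln \<bar>t\<bar> \<le> \<bar>t\<bar> powr (-1/2)" using elim True by (intro minus_ln_le_powr_minus_half) auto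
        moreover have "\<bar>t\<bar> powr (-1/2) = g t + g (-t)" using elim True by (auto simp: g_def)
        ultimately have "max 0 (- ln \<bar>t\<bar>) \<le> g t + g (-t)" by (simp add: g_def)
        then show ?thesis
          using elim by (simp add: log_kernel_pos_def g_def ennreal_plus[symmetric] ennreal_leI del: ennreal_plus)
      qed (use elim in \<open>simp add: log_kernel_pos_def max_def\<close>)
    qed
  qed
  also have "\<dots> = (\<integral>\<^sup>+t. ennreal (g t) \<partial>lborel) + (\<integral>\<^sup>+t. ennreal (g (-t)) \<partial>lborel)"
    by (rule nn_integral_add) auto
  also have "(\<integral>\<^sup>+t. ennreal (g (-t)) \<partial>lborel) = (\<integral>\<^sup>+t. ennreal (g t) \<partial>lborel)"
    using nn_integral_real_affine[of "\<lambda>t. ennreal (g t)" "-1" 0] by simp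
  finally have "log_kernel_pos_integral \<le> 2 + 2" using g_int by simp
  then show ?thesis by (rule le_less_trans) simp
qed

lemma nn_integral_log_kernel_pos_rescaled:
  assumes "s > 0"
  shows "(\<integral>\<^sup>+w. log_kernel_pos 0 (s * w - s * z) \<partial>lborel) = ennreal (1 / s) * log_kernel_pos_integral"
proof -
  have "log_kernel_pos_integral = ennreal s * (\<integral>\<^sup>+w. log_kernel_pos 0 (s * w - s * z) \<partial>lborel)"
    unfolding log_kernel_pos_integral_def
    using nn_integral_real_affine[of "log_kernel_pos 0" s "- (s * z)"] assms by simp
  then have "ennreal (1 / s) * log_kernel_pos_integral =
      ennreal (1 / s) * ennreal s * (\<integral>\<^sup>+w. log_kernel_pos 0 (s * w - s * z) \<partial>lborel)"
    by (simp add: mult.assoc)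
  also have "ennreal (1 / s) * ennreal s = 1"
    using assms by (simp add: ennreal_mult[symmetric])
  finally show ?thesis by simp
qed

section \<open>Energy of the positive part of the kernel\<close>

definition pos_log_energy :: "real measure \<Rightarrow> ennreal" where
  "pos_log_energy M = (\<integral>\<^sup>+z. (\<integral>\<^sup>+w. log_kernel_pos z w \<partial>M) \<partial>M)"

lemma log_energy_eq_pos_log_energy:
  assumes "sets M = sets borel" "measure_support M \<subseteq> {0..1}"
  shows "log_energy M = enn2ereal (pos_log_energy M)"
proof -
  have AE: "AE x in M. x \<in> {0..1}" by (rule AE_measure_support_subset[OF assms])
  have "(\<integral>\<^sup>+z. (\<integral>\<^sup>+w. log_kernel_neg z w \<partial>M) \<partial>M) = (\<integral>\<^sup>+z. 0 \<partial>M)"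
  proof (rule nn_integral_cong_AE)
    show "AE z in M. (\<integral>\<^sup>+w. log_kernel_neg z w \<partial>M) = 0"
      using AE
    proof (rule eventually_mono)
      fix z :: real assume z: "z \<in> {0..1}"
      have "(\<integral>\<^sup>+w. log_kernel_neg z w \<partial>M) = (\<integral>\<^sup>+w. 0 \<partial>M)"
        using AE by (intro nn_integral_cong_AE, rule eventually_mono) (use z in \<open>auto intro!: log_kernel_neg_eq_0\<close>)
      then show "(\<integral>\<^sup>+w. log_kernel_neg z w \<partial>M) = 0" by simp
    qed
  qed
  then show ?thesis
    unfolding log_energy_def log_interaction_def pos_log_energy_def by (simp add: zero_ennreal.rep_eq)
qed

lemma pos_log_energy_pair_measure:
  assumes "prob_space M" "sets M = sets borel"
  shows "pos_log_energy M = (\<integral>\<^sup>+p. log_kernel_pos (fst p) (snd p) \<partial>(M \<Otimes>\<^sub>M M))"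
proof -
  interpret prob_space M by fact
  show ?thesis
    unfolding pos_log_energy_def
    using nn_integral_fst[OF borel_measurable_log_kernel_pos_pair_measure[OF assms(2) assms(2)]] by simp
qed

lemma pos_log_energy_distr:
  assumes "prob_space \<Omega>" and Z[measurable]: "Z \<in> borel_measurable \<Omega>"
  shows "pos_log_energy (distr \<Omega> borel Z) = (\<integral>\<^sup>+p. log_kernel_pos (Z (fst p)) (Z (snd p)) \<partial>(\<Omega> \<Otimes>\<^sub>M \<Omega>))"
proof -
  interpret prob_space \<Omega> by fact
  have "(\<lambda>p. log_kernel_pos (fst p) (Z (snd p))) \<in> borel_measurable (borel \<Otimes>\<^sub>M \<Omega>)" by measurable
  from borel_measurable_nn_integral_fst[OF this]
  have "(\<lambda>z. \<integral>\<^sup>+w. log_kernel_pos z (Z w) \<partial>\<Omega>) \<in> borel_measurable (distr \<Omega> borel Z)" by simp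
  then have "pos_log_energy (distr \<Omega> borel Z) = (\<integral>\<^sup>+x. (\<integral>\<^sup>+w. log_kernel_pos (Z x) (Z w) \<partial>\<Omega>) \<partial>\<Omega>)"
    unfolding pos_log_energy_def by (simp add: nn_integral_distr)
  also have "\<dots> = (\<integral>\<^sup>+p. log_kernel_pos (Z (fst p)) (Z (snd p)) \<partial>(\<Omega> \<Otimes>\<^sub>M \<Omega>))"
    by (subst nn_integral_fst[symmetric]) measurable
  finally show ?thesis .
qed

lemma pos_log_energy_le_of_weak_conv:
  assumes "\<And>n. real_distribution (\<nu> n)" "real_distribution \<mu>" "weak_conv_m \<nu> \<mu>"
    and B: "\<And>n. pos_log_energy (\<nu> n) \<le> B"
  shows "pos_log_energy \<mu> \<le> B"
proof -
  obtain \<Omega> :: "real measure" and Ys Y where \<Omega>: "prob_space \<Omega>"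
    and Ys[measurable]: "\<And>n. Ys n \<in> borel_measurable \<Omega>" and Ys_distr: "\<And>n. distr \<Omega> borel (Ys n) = \<nu> n"
    and Y: "Y \<in> measurable \<Omega> lborel" and Y_distr: "distr \<Omega> borel Y = \<mu>"
    and conv: "\<And>x. x \<in> space \<Omega> \<Longrightarrow> (\<lambda>n. Ys n x) \<longlonglongrightarrow> Y x"
    using Skorohod[OF assms(1-3)] by blast
  have "pos_log_energy \<mu> = (\<integral>\<^sup>+p. log_kernel_pos (Y (fst p)) (Y (snd p)) \<partial>(\<Omega> \<Otimes>\<^sub>M \<Omega>))"
    using pos_log_energy_distr[OF \<Omega>, of Y] Y Y_distr by simp
  also have "\<dots> \<le> (\<integral>\<^sup>+p. liminf (\<lambda>n. log_kernel_pos (Ys n (fst p)) (Ys n (snd p))) \<partial>(\<Omega> \<Otimes>\<^sub>M \<Omega>))"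
  proof (rule nn_integral_mono)
    fix p assume "p \<in> space (\<Omega> \<Otimes>\<^sub>M \<Omega>)"
    then have "(\<lambda>n. log_kernel_pos (Ys n (fst p)) (Ys n (snd p))) \<longlonglongrightarrow> log_kernel_pos (Y (fst p)) (Y (snd p))"
      by (intro tendsto_log_kernel_pos conv) (auto simp: space_pair_measure)
    then show "log_kernel_pos (Y (fst p)) (Y (snd p)) \<le> liminf (\<lambda>n. log_kernel_pos (Ys n (fst p)) (Ys n (snd p)))"
      by (simp add: lim_imp_Liminf)
  qed
  also have "\<dots> \<le> liminf (\<lambda>n. \<integral>\<^sup>+p. log_kernel_pos (Ys n (fst p)) (Ys n (snd p)) \<partial>(\<Omega> \<Otimes>\<^sub>M \<Omega>))"
    by (intro nn_integral_liminf) measurable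
  also have "\<dots> = liminf (\<lambda>n. pos_log_energy (\<nu> n))"
    using pos_log_energy_distr[OF \<Omega> Ys] Ys_distr by simp
  also have "\<dots> \<le> limsup (\<lambda>n. pos_log_energy (\<nu> n))" by (rule Liminf_le_Limsup) simp
  also have "\<dots> \<le> B" using B by (intro Limsup_bounded) auto
  finally show ?thesis .
qed

lemma real_distribution_iff: "real_distribution M \<longleftrightarrow> prob_space M \<and> sets M = sets borel"
  by (auto simp: real_distribution_def real_distribution_axioms_def)

lemma emeasure_ball_weak_limit_eq_0:
  assumes \<nu>: "\<And>n. real_distribution (\<nu> n)" and \<mu>: "real_distribution \<mu>" and conv: "weak_conv_m \<nu> \<mu>"
    and "e > 0" and ev: "eventually (\<lambda>n. emeasure (\<nu> n) (ball x e) = 0) sequentially"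
  shows "emeasure \<mu> (ball x (e/2)) = 0"
proof -
  define g where "g y = max 0 (e/2 - \<bar>y - x\<bar>)" for y :: real
  have g_cont: "isCont g y" for y unfolding g_def by (intro continuous_intros)
  have g_bdd: "norm (g y) \<le> e/2" for y using \<open>e > 0\<close> unfolding g_def by (auto simp: max_def)
  have "eventually (\<lambda>n. integral\<^sup>L (\<nu> n) g = 0) sequentially"
    using ev
  proof eventually_elim
    case (elim n)
    then have "AE y in \<nu> n. y \<notin> ball x e"
      using \<nu>[of n] by (intro AE_not_in) (simp add: null_sets_def real_distribution_iff)
    then have "AE y in \<nu> n. g y = 0"
      by eventually_elim (auto simp: g_def dist_real_def)
    then show ?case by (rule integral_eq_zero_AE)
  qed
  then have "(\<lambda>n. integral\<^sup>L (\<nu> n) g) \<longlonglongrightarrow> 0" by (rule tendsto_eventually)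
  moreover have "(\<lambda>n. integral\<^sup>L (\<nu> n) g) \<longlonglongrightarrow> integral\<^sup>L \<mu> g"
    by (rule weak_conv_imp_integral_bdd_continuous_conv[OF \<nu> \<mu> conv g_cont g_bdd])
  ultimately have int0: "integral\<^sup>L \<mu> g = 0" using LIMSEQ_unique by blast
  interpret real_distribution \<mu> by fact
  have "g \<in> borel_measurable \<mu>"
    using g_cont by (simp add: continuous_at_imp_continuous_on borel_measurable_continuous_onI)
  then have "integrable \<mu> g" using g_bdd by (intro integrable_const_bound[of _ "e/2"]) auto
  from integral_nonneg_eq_0_iff_AE[OF this] int0 have "AE y in \<mu>. g y = 0"
    by (auto simp: g_def)
  then have "AE y in \<mu>. y \<notin> ball x (e/2)"
    by eventually_elim (auto simp: g_def dist_real_def max_def abs_minus_commute split: if_splits)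
  then show ?thesis
    by (subst AE_iff_measurable[symmetric]) auto
qed

lemma measure_support_weak_limit_subset:
  assumes \<nu>: "\<And>n. real_distribution (\<nu> n)" and \<mu>: "real_distribution \<mu>" and conv: "weak_conv_m \<nu> \<mu>"
    and "closed C" and ev: "eventually (\<lambda>n. measure_support (\<nu> n) \<subseteq> C) sequentially"
  shows "measure_support \<mu> \<subseteq> C"
proof
  fix x assume x: "x \<in> measure_support \<mu>"
  show "x \<in> C"
  proof (rule ccontr)
    assume "x \<notin> C"
    moreover have "open (- C)" using \<open>closed C\<close> by (simp add: open_Compl)
    ultimately obtain e where e: "e > 0" "ball x e \<subseteq> - C"
      using open_contains_ball by blast
    have "eventually (\<lambda>n. emeasure (\<nu> n) (ball x e) = 0) sequentially"
      using ev
    proof eventually_elim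
      case (elim n)
      show ?case
        using elim e \<nu>[of n]
        by (intro emeasure_eq_0_if_disjoint_measure_support) (auto simp: real_distribution_iff)
    qed
    then have "emeasure \<mu> (ball x (e/2)) = 0"
      by (rule emeasure_ball_weak_limit_eq_0[OF \<nu> \<mu> conv \<open>e > 0\<close>])
    moreover have "0 < emeasure \<mu> (ball x (e/2))"
      using x e(1) unfolding measure_support_def by auto
    ultimately show False by simp
  qed
qed

lemma tight_if_measure_support_subset:
  assumes \<nu>: "\<And>n. real_distribution (\<nu> n)" and supp: "\<And>n. measure_support (\<nu> n) \<subseteq> {a..b}"
  shows "tight \<nu>"
proof -
  have "measure (\<nu> n) {a - 1<..max a b} = 1" for n
  proof -
    interpret real_distribution "\<nu> n" by (rule \<nu>)
    have "AE x in \<nu> n. x \<in> {a - 1<..max a b}"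
      using AE_measure_support_subset[OF events_eq_borel supp[of n]] by eventually_elim auto
    then show ?thesis by (subst prob_eq_1) auto
  qed
  then show ?thesis
    unfolding tight_def using \<nu> by (intro conjI allI impI exI[of _ "a - 1"] exI[of _ "max a b"]) auto
qed

lemma piecewise_continuous_one_sided_limits:
  assumes "piecewise_continuous f"
  obtains P where "finite P" "continuous_on (- P) f"
    "\<And>p. \<exists>a. (f \<longlongrightarrow> a) (at_left p)" "\<And>p. \<exists>b. (f \<longlongrightarrow> b) (at_right p)"
proof -
  obtain P where P: "finite P" "continuous_on (- P) f"
    "\<forall>p\<in>P. (\<exists>a. (f \<longlongrightarrow> a) (at_left p)) \<and> (\<exists>b. (f \<longlongrightarrow> b) (at_right p))"
    using assms unfolding piecewise_continuous_def by blast
  have "(f \<longlongrightarrow> f p) (at p)" if "p \<notin> P" for p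
  proof -
    have "open (- P)" using P(1) by (simp add: finite_imp_closed open_Compl)
    then show ?thesis
      using P(2) that by (simp add: continuous_on_eq_continuous_at isCont_def)
  qed
  then have "(\<exists>a. (f \<longlongrightarrow> a) (at_left p)) \<and> (\<exists>b. (f \<longlongrightarrow> b) (at_right p))" for p
    using P(3) by (cases "p \<in> P") (auto intro: tendsto_mono[OF at_within_le_at])
  with P(1,2) that show ?thesis by blast
qed

lemma piecewise_continuous_add:
  assumes "piecewise_continuous f" "piecewise_continuous g"
  shows "piecewise_continuous (\<lambda>x. f x + g x)"
proof -
  obtain P where P: "finite P" "continuous_on (- P) f"
    "\<And>p. \<exists>a. (f \<longlongrightarrow> a) (at_left p)" "\<And>p. \<exists>b. (f \<longlongrightarrow> b) (at_right p)"
    using piecewise_continuous_one_sided_limits[OF assms(1)] by blast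
  obtain Q where Q: "finite Q" "continuous_on (- Q) g"
    "\<And>p. \<exists>a. (g \<longlongrightarrow> a) (at_left p)" "\<And>p. \<exists>b. (g \<longlongrightarrow> b) (at_right p)"
    using piecewise_continuous_one_sided_limits[OF assms(2)] by blast
  have "continuous_on (- (P \<union> Q)) (\<lambda>x. f x + g x)"
    by (intro continuous_on_add continuous_on_subset[OF P(2)] continuous_on_subset[OF Q(2)]) auto
  moreover have "\<exists>a. ((\<lambda>x. f x + g x) \<longlongrightarrow> a) (at_left p)" "\<exists>b. ((\<lambda>x. f x + g x) \<longlongrightarrow> b) (at_right p)" for p
    using P(3,4)[of p] Q(3,4)[of p] by (auto intro: tendsto_add)
  ultimately show ?thesis
    unfolding piecewise_continuous_def using P(1) Q(1) by blast
qed

lemma piecewise_continuous_cmult: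
  assumes "piecewise_continuous f"
  shows "piecewise_continuous (\<lambda>x. c * f x)"
proof -
  obtain P where P: "finite P" "continuous_on (- P) f"
    "\<And>p. \<exists>a. (f \<longlongrightarrow> a) (at_left p)" "\<And>p. \<exists>b. (f \<longlongrightarrow> b) (at_right p)"
    using piecewise_continuous_one_sided_limits[OF assms] by blast
  have "continuous_on (- P) (\<lambda>x. c * f x)" by (intro continuous_on_mult continuous_on_const P(2))
  moreover have "\<exists>a. ((\<lambda>x. c * f x) \<longlongrightarrow> a) (at_left p)" "\<exists>b. ((\<lambda>x. c * f x) \<longlongrightarrow> b) (at_right p)" for p
    using P(3,4)[of p] by (auto intro: tendsto_mult_left)
  ultimately show ?thesis
    unfolding piecewise_continuous_def using P(1) by blast
qed

lemma piecewise_continuous_sum: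
  assumes "\<And>i. i \<in> I \<Longrightarrow> piecewise_continuous (f i)"
  shows "piecewise_continuous (\<lambda>x. \<Sum>i\<in>I. f i x)"
proof (cases "finite I")
  case True
  then show ?thesis using assms
  proof (induction I rule: finite_induct)
    case empty
    show ?case unfolding piecewise_continuous_def by (intro exI[of _ "{}"]) auto
  qed (simp add: piecewise_continuous_add)
next
  case False
  then show ?thesis unfolding piecewise_continuous_def by (intro exI[of _ "{}"]) auto
qed

lemma eventually_at_left_trichotomy:
  fixes a b p :: real
  shows "eventually (\<lambda>y. y < a) (at_left p) \<or> eventually (\<lambda>y. a < y \<and> y < b) (at_left p) \<or>
    eventually (\<lambda>y. b < y) (at_left p)"
proof -
  consider "p \<le> a" | "a < p" "p \<le> b" | "b < p" by linarith
  then show ?thesis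
  proof cases
    case 1
    then show ?thesis
      using eventually_at_left_real[of "p - 1" p] by (intro disjI1) (auto elim!: eventually_mono)
  next
    case 2
    then show ?thesis
      using eventually_at_left_real[of a p] by (intro disjI2 disjI1) (auto elim!: eventually_mono)
  next
    case 3
    then show ?thesis
      using eventually_at_left_real[of b p] by (intro disjI2) (auto elim!: eventually_mono)
  qed
qed

lemma eventually_at_right_trichotomy:
  fixes a b p :: real
  shows "eventually (\<lambda>y. y < a) (at_right p) \<or> eventually (\<lambda>y. a < y \<and> y < b) (at_right p) \<or>
    eventually (\<lambda>y. b < y) (at_right p)"
proof -
  consider "p < a" | "a \<le> p" "p < b" | "b \<le> p" by linarith
  then show ?thesis
  proof cases
    case 1
    then show ?thesis
      using eventually_at_right_real[of p a] by (intro disjI1) (auto elim!: eventually_mono)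
  next
    case 2
    then show ?thesis
      using eventually_at_right_real[of p b] by (intro disjI2 disjI1) (auto elim!: eventually_mono)
  next
    case 3
    then show ?thesis
      using eventually_at_right_real[of p "p + 1"] by (intro disjI2) (auto elim!: eventually_mono)
  qed
qed

lemma convergent_indicator_if_trichotomy:
  fixes a b :: real
  assumes A: "{a<..<b} \<subseteq> A" "A \<subseteq> {a..b}"
    and F: "eventually (\<lambda>y. y < a) F \<or> eventually (\<lambda>y. a < y \<and> y < b) F \<or> eventually (\<lambda>y. b < y) F"
  shows "\<exists>c. ((indicator A :: real \<Rightarrow> real) \<longlongrightarrow> c) F"
proof -
  have "eventually (\<lambda>y. (indicator A y :: real) = 0) F \<or> eventually (\<lambda>y. (indicator A y :: real) = 1) F"
    using F
  proof (elim disjE)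
    assume "eventually (\<lambda>y. y < a) F"
    then show ?thesis using A by (intro disjI1) (auto simp: indicator_def elim!: eventually_mono)
  next
    assume "eventually (\<lambda>y. a < y \<and> y < b) F"
    then show ?thesis using A by (intro disjI2) (auto simp: indicator_def elim!: eventually_mono)
  next
    assume "eventually (\<lambda>y. b < y) F"
    then show ?thesis using A by (intro disjI1) (auto simp: indicator_def elim!: eventually_mono)
  qed
  then show ?thesis by (auto intro: tendsto_eventually)
qed

lemma isCont_indicator_off_endpoints:
  fixes a b x :: real
  assumes A: "{a<..<b} \<subseteq> A" "A \<subseteq> {a..b}" and "x \<notin> {a, b}"
  shows "isCont (indicator A :: real \<Rightarrow> real) x"
proof -
  have "eventually (\<lambda>y. (indicator A y :: real) = indicator A x) (at x)"
  proof -
    have "x \<noteq> a" "x \<noteq> b" using assms(3) by auto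
    then consider "x < a" | "a < x" "x < b" | "b < x" by (metis linorder_neqE)
    then show ?thesis
    proof cases
      case 1
      then show ?thesis using order_tendstoD(2)[OF tendsto_ident_at[of x UNIV] 1] A
        by (auto simp: indicator_def elim!: eventually_mono)
    next
      case 2
      show ?thesis using order_tendstoD(1)[OF tendsto_ident_at[of x UNIV] 2(1)]
          order_tendstoD(2)[OF tendsto_ident_at[of x UNIV] 2(2)]
        by eventually_elim (use 2 A in \<open>auto simp: indicator_def subset_iff\<close>)
    next
      case 3
      then show ?thesis using order_tendstoD(1)[OF tendsto_ident_at[of x UNIV] 3] A
        by (auto simp: indicator_def elim!: eventually_mono)
    qed
  qed
  then show ?thesis unfolding continuous_at by (rule tendsto_eventually)
qed

lemma piecewise_continuous_indicator:
  fixes a b :: real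
  assumes A: "{a<..<b} \<subseteq> A" "A \<subseteq> {a..b}"
  shows "piecewise_continuous (indicator A :: real \<Rightarrow> real)"
proof -
  have "continuous_on (- {a, b}) (indicator A :: real \<Rightarrow> real)"
    using isCont_indicator_off_endpoints[OF A] by (intro continuous_at_imp_continuous_on) auto
  then show ?thesis
    unfolding piecewise_continuous_def
    by (intro exI[of _ "{a, b}"] conjI ballI convergent_indicator_if_trichotomy[OF A]
        eventually_at_left_trichotomy eventually_at_right_trichotomy) auto
qed

section \<open>Histograms on a uniform grid of the unit interval\<close>

definition grid_cell :: "nat \<Rightarrow> nat \<Rightarrow> real set" where
  "grid_cell N i = {real i / real N ..< real (Suc i) / real N} \<union> (if Suc i = N then {1} else {})"

lemma grid_cell_borel[measurable]: "grid_cell N i \<in> sets borel"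
  unfolding grid_cell_def by auto

lemma grid_cell_subset:
  assumes "i < N"
  shows "grid_cell N i \<subseteq> {real i / real N .. real (Suc i) / real N}"
proof -
  have "real i / real N \<le> real (Suc i) / real N" by (intro divide_right_mono) auto
  then show ?thesis using assms by (auto simp: grid_cell_def)
qed

lemma grid_cell_subset_unit_interval:
  assumes "i < N"
  shows "grid_cell N i \<subseteq> {0..1}"
proof
  fix x assume "x \<in> grid_cell N i"
  then have "real i / real N \<le> x" "x \<le> real (Suc i) / real N"
    using grid_cell_subset[OF assms] by auto
  moreover have "0 \<le> real i / real N" "real (Suc i) / real N \<le> 1"
    using assms by (simp_all add: field_simps)
  ultimately have "0 \<le> x" "x \<le> 1" by linarith+
  then show "x \<in> {0..1}" by simp
qed

lemma dist_grid_cell_le: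
  assumes "i < N" "z \<in> grid_cell N i" "y \<in> grid_cell N i"
  shows "\<bar>z - y\<bar> \<le> 1 / real N"
proof -
  have "real i / real N \<le> z" "z \<le> real (Suc i) / real N" "real i / real N \<le> y" "y \<le> real (Suc i) / real N"
    using assms grid_cell_subset[OF assms(1)] by auto
  moreover have "real (Suc i) / real N - real i / real N = 1 / real N"
    by (simp add: diff_divide_distrib[symmetric])
  ultimately show ?thesis by (simp only: abs_le_iff) linarith
qed

lemma disjoint_grid_cells:
  assumes "i < N" "j < N" "i \<noteq> j"
  shows "grid_cell N i \<inter> grid_cell N j = {}"
proof -
  have *: "grid_cell N i \<inter> grid_cell N j = {}" if "i < j" "j < N" for i j
  proof -
    have "x < real (Suc i) / real N" if "x \<in> grid_cell N i" for x
      using that \<open>i < j\<close> \<open>j < N\<close> by (auto simp: grid_cell_def)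
    moreover have "real j / real N \<le> x" if "x \<in> grid_cell N j" for x
      using that grid_cell_subset[OF \<open>j < N\<close>] by auto
    moreover have "real (Suc i) / real N \<le> real j / real N"
      using that by (intro divide_right_mono) auto
    ultimately show ?thesis by (meson disjoint_iff not_le order_trans)
  qed
  show ?thesis
  proof (cases "i < j")
    case True
    then show ?thesis using * assms by blast
  next
    case False
    then show ?thesis using *[of j i] assms by (simp add: Int_commute)
  qed
qed

lemma grid_cell_cover:
  assumes "N \<ge> 1" "y \<in> {0..1}"
  obtains i where "i < N" "y \<in> grid_cell N i"
proof (cases "y = 1")
  case True
  have "Suc (N - 1) = N" using assms(1) by simp
  then have "y \<in> grid_cell N (N - 1)" using True by (simp add: grid_cell_def)
  then show ?thesis using assms(1) by (intro that[of "N - 1"]) auto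
next
  case False
  define i where "i = nat \<lfloor>real N * y\<rfloor>"
  have "real i = of_int \<lfloor>real N * y\<rfloor>" using assms(2) by (simp add: i_def)
  then have i: "real i \<le> real N * y" "real N * y < real i + 1"
    using of_int_floor_le[of "real N * y"] real_of_int_floor_add_one_gt[of "real N * y"] by linarith+
  moreover have "real N * y < real N" using False assms by simp
  ultimately have "i < N" by linarith
  moreover have "real i / real N \<le> y" "y < real (Suc i) / real N"
    using i assms(1) by (simp_all add: field_simps)
  then have "y \<in> grid_cell N i" by (simp add: grid_cell_def)
  ultimately show ?thesis using that by blast
qed

lemma Union_grid_cells: "N \<ge> 1 \<Longrightarrow> (\<Union>i<N. grid_cell N i) = {0..1}"
  using grid_cell_cover[of N] grid_cell_subset_unit_interval[of _ N] by blast

lemma emeasure_grid_cell: "emeasure lborel (grid_cell N i) = ennreal (1 / real N)"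
proof -
  have "real i / real N \<le> real (Suc i) / real N" by (intro divide_right_mono) auto
  then have "emeasure lborel {real i / real N ..< real (Suc i) / real N} = ennreal (1 / real N)"
    by (simp add: diff_divide_distrib[symmetric])
  moreover have "emeasure lborel (A \<union> (if Suc i = N then {1} else {})) = emeasure lborel A"
    if "A \<in> sets borel" for A :: "real set"
    using that by (subst emeasure_Un_null_set) (auto simp: null_sets_def)
  ultimately show ?thesis unfolding grid_cell_def by simp
qed

lemma sum_grid_cells_eq:
  fixes c :: "nat \<Rightarrow> 'a::comm_monoid_add"
  assumes "i0 < N" "y \<in> grid_cell N i0"
  shows "(\<Sum>i<N. if y \<in> grid_cell N i then c i else 0) = c i0"
proof -
  have "y \<notin> grid_cell N i" if "i < N" "i \<noteq> i0" for i
    using disjoint_grid_cells[OF that(1) assms(1) that(2)] assms(2) by blast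
  then have "(\<Sum>i\<in>{..<N} - {i0}. if y \<in> grid_cell N i then c i else 0) = 0"
    by (intro sum.neutral) auto
  moreover have "(\<Sum>i<N. if y \<in> grid_cell N i then c i else 0) =
      (if y \<in> grid_cell N i0 then c i0 else 0) + (\<Sum>i\<in>{..<N} - {i0}. if y \<in> grid_cell N i then c i else 0)"
    using assms by (intro sum.remove) auto
  ultimately show ?thesis using assms by simp
qed

lemma piecewise_continuous_indicator_grid_cell:
  assumes "i < N"
  shows "piecewise_continuous (indicator (grid_cell N i) :: real \<Rightarrow> real)"
proof (rule piecewise_continuous_indicator)
  show "{real i / real N<..<real (Suc i) / real N} \<subseteq> grid_cell N i" by (auto simp: grid_cell_def)
qed (rule grid_cell_subset[OF assms])

definition histogram_density :: "real measure \<Rightarrow> nat \<Rightarrow> real \<Rightarrow> real" where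
  "histogram_density \<mu> N x = (\<Sum>i<N. real N * measure \<mu> (grid_cell N i) * indicator (grid_cell N i) x)"

definition histogram :: "real measure \<Rightarrow> nat \<Rightarrow> real measure" where
  "histogram \<mu> N = density lborel (\<lambda>x. ennreal (histogram_density \<mu> N x))"

definition histogram_weight :: "real measure \<Rightarrow> nat \<Rightarrow> nat \<Rightarrow> ennreal" where
  "histogram_weight \<mu> N i = ennreal (real N * measure \<mu> (grid_cell N i))"

lemma borel_measurable_histogram_density[measurable]: "histogram_density \<mu> N \<in> borel_measurable borel"
  unfolding histogram_density_def by measurable

lemma sets_histogram[simp]: "sets (histogram \<mu> N) = sets borel"
  by (simp add: histogram_def)

lemma ennreal_histogram_density:
  "ennreal (histogram_density \<mu> N x) = (\<Sum>i<N. histogram_weight \<mu> N i * indicator (grid_cell N i) x)"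
  unfolding histogram_density_def histogram_weight_def
  by (subst sum_ennreal[symmetric]) (auto intro!: sum.cong simp: indicator_def)

lemma has_pc_density_histogram: "has_pc_density (histogram \<mu> N)"
  unfolding has_pc_density_def histogram_def
proof (intro exI[of _ "histogram_density \<mu> N"] conjI allI refl)
  show "0 \<le> histogram_density \<mu> N x" for x
    unfolding histogram_density_def by (intro sum_nonneg) auto
  show "piecewise_continuous (histogram_density \<mu> N)"
    unfolding histogram_density_def
    by (intro piecewise_continuous_sum piecewise_continuous_cmult piecewise_continuous_indicator_grid_cell) auto
qed simp

lemma measure_support_histogram: "measure_support (histogram \<mu> N) \<subseteq> {0..1}"
  unfolding histogram_def
proof (rule measure_support_density_subset)
  show "ennreal (histogram_density \<mu> N x) = 0" if "x \<notin> {0..1}" for x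
  proof -
    have "x \<notin> grid_cell N i" if "i < N" for i
      using grid_cell_subset_unit_interval[OF that] \<open>x \<notin> {0..1}\<close> by blast
    then show ?thesis unfolding histogram_density_def by (simp add: sum.neutral)
  qed
qed auto

lemma prob_space_histogram:
  assumes "N \<ge> 1" "prob_space \<mu>" "sets \<mu> = sets borel" "AE x in \<mu>. x \<in> {0..1}"
  shows "prob_space (histogram \<mu> N)"
proof (rule prob_spaceI)
  interpret prob_space \<mu> by fact
  have "emeasure (histogram \<mu> N) (space (histogram \<mu> N)) = (\<integral>\<^sup>+y. ennreal (histogram_density \<mu> N y) \<partial>lborel)"
    by (simp add: histogram_def emeasure_density)
  also have "\<dots> = (\<integral>\<^sup>+y. (\<Sum>i<N. histogram_weight \<mu> N i * indicator (grid_cell N i) y) \<partial>lborel)"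
    by (simp only: ennreal_histogram_density)
  also have "\<dots> = (\<Sum>i<N. histogram_weight \<mu> N i * ennreal (1 / real N))"
    by (subst nn_integral_sum) (auto simp: nn_integral_cmult_indicator emeasure_grid_cell)
  also have "\<dots> = ennreal (\<Sum>i<N. measure \<mu> (grid_cell N i))"
    using assms(1) by (simp add: histogram_weight_def ennreal_mult[symmetric] sum_ennreal)
  also have "(\<Sum>i<N. measure \<mu> (grid_cell N i)) = measure \<mu> (\<Union>i<N. grid_cell N i)"
    using disjoint_grid_cells assms(3)
    by (intro finite_measure_finite_Union[symmetric]) (auto simp: disjoint_family_on_def)
  also have "\<dots> = 1"
    using assms by (simp add: Union_grid_cells prob_eq_1)
  finally show "emeasure (histogram \<mu> N) (space (histogram \<mu> N)) = 1" by simp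
qed

definition cell_pair_energy :: "nat \<Rightarrow> nat \<Rightarrow> nat \<Rightarrow> ennreal" where
  "cell_pair_energy N i j = (\<integral>\<^sup>+p. indicator (grid_cell N i) (fst p) * indicator (grid_cell N j) (snd p) *
     log_kernel_pos (fst p) (snd p) \<partial>(lborel \<Otimes>\<^sub>M lborel))"

text \<open>The mean of the kernel over the product of the grid cells containing the two arguments.\<close>
definition grid_averaged_log_kernel :: "nat \<Rightarrow> real \<times> real \<Rightarrow> ennreal" where
  "grid_averaged_log_kernel N p =
     (\<Sum>i<N. \<Sum>j<N. of_nat N ^ 2 * cell_pair_energy N i j * indicator (grid_cell N i \<times> grid_cell N j) p)"

lemma borel_measurable_grid_averaged_log_kernel:
  assumes "sets M = sets borel" "sets M' = sets borel"
  shows "grid_averaged_log_kernel N \<in> borel_measurable (M \<Otimes>\<^sub>M M')"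
proof -
  have [measurable]: "grid_cell N i \<times> grid_cell N j \<in> sets (M \<Otimes>\<^sub>M M')" for i j
    by (simp add: sets_pair_measure_cong[OF assms])
  show ?thesis unfolding grid_averaged_log_kernel_def by measurable
qed

lemma pos_log_energy_histogram:
  assumes "prob_space (histogram \<mu> N)"
  shows "pos_log_energy (histogram \<mu> N) =
    (\<Sum>i<N. \<Sum>j<N. histogram_weight \<mu> N i * histogram_weight \<mu> N j * cell_pair_energy N i j)"
proof -
  let ?\<nu> = "histogram \<mu> N" and ?f = "\<lambda>x. ennreal (histogram_density \<mu> N x)"
  interpret \<nu>: prob_space ?\<nu> by fact
  have "?\<nu> \<Otimes>\<^sub>M ?\<nu> = density (lborel \<Otimes>\<^sub>M lborel) (\<lambda>(x, y). ?f x * ?f y)"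
    unfolding histogram_def
    by (rule pair_measure_density)
       (auto simp: histogram_def[symmetric] intro: lborel.sigma_finite_measure_axioms \<nu>.sigma_finite_measure_axioms)
  then have "pos_log_energy ?\<nu> =
      (\<integral>\<^sup>+p. ?f (fst p) * ?f (snd p) * log_kernel_pos (fst p) (snd p) \<partial>(lborel \<Otimes>\<^sub>M lborel))"
    using pos_log_energy_pair_measure[OF assms sets_histogram]
    by (simp add: nn_integral_density case_prod_beta)
  also have "\<dots> = (\<integral>\<^sup>+p. (\<Sum>i<N. \<Sum>j<N. histogram_weight \<mu> N i * histogram_weight \<mu> N j *
      (indicator (grid_cell N i) (fst p) * indicator (grid_cell N j) (snd p) * log_kernel_pos (fst p) (snd p)))
      \<partial>(lborel \<Otimes>\<^sub>M lborel))"
    unfolding ennreal_histogram_density sum_product sum_distrib_right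
    by (intro nn_integral_cong sum.cong refl)
       (simp add: mult_ac sum_distrib_left
         del: Bochner_Integration.sum_mult_indicator Indicator_Function.sum_mult_indicator
           Bochner_Integration.sum_indicator_mult Indicator_Function.sum_indicator_mult)
  also have "\<dots> = (\<Sum>i<N. \<Sum>j<N. histogram_weight \<mu> N i * histogram_weight \<mu> N j * cell_pair_energy N i j)"
    unfolding cell_pair_energy_def
    by (simp add: nn_integral_sum nn_integral_cmult borel_measurable_log_kernel_pos_pair_measure)
  finally show ?thesis .
qed

lemma nn_integral_grid_averaged_log_kernel:
  assumes "prob_space \<mu>" and sets: "sets \<mu> = sets borel"
  shows "(\<integral>\<^sup>+p. grid_averaged_log_kernel N p \<partial>(\<mu> \<Otimes>\<^sub>M \<mu>)) =
    (\<Sum>i<N. \<Sum>j<N. histogram_weight \<mu> N i * histogram_weight \<mu> N j * cell_pair_energy N i j)"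
proof -
  interpret prob_space \<mu> by fact
  have [measurable]: "grid_cell N i \<times> grid_cell N j \<in> sets (\<mu> \<Otimes>\<^sub>M \<mu>)" for i j
    by (simp add: sets_pair_measure_cong[OF sets sets])
  have weight: "histogram_weight \<mu> N i = of_nat N * emeasure \<mu> (grid_cell N i)" for i
    by (simp add: histogram_weight_def emeasure_eq_measure ennreal_mult ennreal_of_nat_eq_real_of_nat)
  have "(\<integral>\<^sup>+p. grid_averaged_log_kernel N p \<partial>(\<mu> \<Otimes>\<^sub>M \<mu>)) =
      (\<Sum>i<N. \<Sum>j<N. of_nat N ^ 2 * cell_pair_energy N i j * emeasure (\<mu> \<Otimes>\<^sub>M \<mu>) (grid_cell N i \<times> grid_cell N j))"
    unfolding grid_averaged_log_kernel_def
    by (simp add: nn_integral_sum nn_integral_cmult_indicator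
        del: Bochner_Integration.sum_mult_indicator Indicator_Function.sum_mult_indicator)
  also have "\<dots> = (\<Sum>i<N. \<Sum>j<N. histogram_weight \<mu> N i * histogram_weight \<mu> N j * cell_pair_energy N i j)"
    using sets by (simp add: emeasure_pair_measure_Times weight power2_eq_square mult_ac)
  finally show ?thesis .
qed

lemma of_nat_power2_mult_inverse_power2:
  assumes "N \<ge> 1"
  shows "of_nat N ^ 2 * (ennreal (1 / real N) * ennreal (1 / real N)) = 1"
proof -
  have "of_nat N ^ 2 * (ennreal (1 / real N) * ennreal (1 / real N)) = ennreal (real N ^ 2 * (1 / real N * (1 / real N)))"
    by (simp add: ennreal_of_nat_eq_real_of_nat ennreal_mult[symmetric] ennreal_power)
  also have "real N ^ 2 * (1 / real N * (1 / real N)) = 1"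
    using assms by (simp add: field_simps power2_eq_square)
  finally show ?thesis by simp
qed

lemma cell_pair_energy_le_const:
  assumes N: "N \<ge> 1"
    and c: "\<And>z w. z \<in> grid_cell N i \<Longrightarrow> w \<in> grid_cell N j \<Longrightarrow> log_kernel_pos z w \<le> c"
  shows "of_nat N ^ 2 * cell_pair_energy N i j \<le> c"
proof -
  have "cell_pair_energy N i j \<le> (\<integral>\<^sup>+p. c * indicator (grid_cell N i \<times> grid_cell N j) p \<partial>(lborel \<Otimes>\<^sub>M lborel))"
    unfolding cell_pair_energy_def
    by (intro nn_integral_mono) (use c in \<open>auto simp: indicator_def\<close>)
  also have "\<dots> = c * (ennreal (1 / real N) * ennreal (1 / real N))"
    by (simp add: nn_integral_cmult_indicator lborel.emeasure_pair_measure_Times emeasure_grid_cell)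
  finally have "of_nat N ^ 2 * cell_pair_energy N i j \<le> of_nat N ^ 2 * (c * (ennreal (1 / real N) * ennreal (1 / real N)))"
    by (rule mult_left_mono) simp
  also have "\<dots> = c" using of_nat_power2_mult_inverse_power2[OF N] by (simp add: mult_ac)
  finally show ?thesis .
qed

text \<open>Adjacent or coincident cells: rescaling by \<open>N\<close> turns the kernel into \<open>ln N\<close> plus the kernel
  at unit scale, whose integral is finite.\<close>
lemma cell_pair_energy_le_near:
  assumes N: "N \<ge> 1"
  shows "of_nat N ^ 2 * cell_pair_energy N i j \<le> ennreal (ln (real N)) + log_kernel_pos_integral"
proof -
  let ?K = "ennreal (1 / real N) * (ennreal (ln (real N)) + log_kernel_pos_integral)"
  have inner: "(\<integral>\<^sup>+w. indicator (grid_cell N j) w * log_kernel_pos z w \<partial>lborel) \<le> ?K" for z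
  proof -
    have "(\<integral>\<^sup>+w. indicator (grid_cell N j) w * log_kernel_pos z w \<partial>lborel)
        \<le> (\<integral>\<^sup>+w. ennreal (ln (real N)) * indicator (grid_cell N j) w +
              log_kernel_pos 0 (real N * w - real N * z) \<partial>lborel)"
      using log_kernel_pos_le_scaled[of "real N" z] N
      by (intro nn_integral_mono) (auto simp: indicator_def)
    also have "\<dots> = ennreal (ln (real N)) * ennreal (1 / real N) + ennreal (1 / real N) * log_kernel_pos_integral"
      using N by (subst nn_integral_add)
        (auto simp: nn_integral_cmult_indicator emeasure_grid_cell nn_integral_log_kernel_pos_rescaled[of "real N"])
    also have "\<dots> = ?K" by (simp add: distrib_left mult_ac)
    finally show ?thesis .
  qed
  have "cell_pair_energy N i j =
      (\<integral>\<^sup>+z. indicator (grid_cell N i) z * (\<integral>\<^sup>+w. indicator (grid_cell N j) w * log_kernel_pos z w \<partial>lborel) \<partial>lborel)"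
    unfolding cell_pair_energy_def
    by (subst lborel.nn_integral_fst[symmetric])
       (auto intro!: nn_integral_cong simp: nn_integral_cmult[symmetric] mult.assoc)
  also have "\<dots> \<le> (\<integral>\<^sup>+z. ?K * indicator (grid_cell N i) z \<partial>lborel)"
    by (intro nn_integral_mono) (use inner in \<open>auto simp: indicator_def\<close>)
  also have "\<dots> = ?K * ennreal (1 / real N)"
    by (simp add: nn_integral_cmult_indicator emeasure_grid_cell)
  finally have "of_nat N ^ 2 * cell_pair_energy N i j \<le> of_nat N ^ 2 * (?K * ennreal (1 / real N))"
    by (rule mult_left_mono) simp
  also have "\<dots> = (of_nat N ^ 2 * (ennreal (1 / real N) * ennreal (1 / real N))) *
      (ennreal (ln (real N)) + log_kernel_pos_integral)"
    by (simp add: mult_ac)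
  also have "\<dots> = ennreal (ln (real N)) + log_kernel_pos_integral"
    using of_nat_power2_mult_inverse_power2[OF N] by simp
  finally show ?thesis .
qed

lemma cell_pair_energy_le_far:
  assumes N: "N \<ge> 1" and "i < N" "y \<in> grid_cell N i" "j < N" "y' \<in> grid_cell N j"
    and far: "2 / real N < \<bar>y - y'\<bar>"
  shows "of_nat N ^ 2 * cell_pair_energy N i j \<le> ennreal (max 0 (- ln (\<bar>y - y'\<bar> - 2 / real N)))"
proof (rule cell_pair_energy_le_const[OF N])
  fix z w assume "z \<in> grid_cell N i" "w \<in> grid_cell N j"
  then have "\<bar>z - y\<bar> \<le> 1 / real N" "\<bar>w - y'\<bar> \<le> 1 / real N"
    using assms dist_grid_cell_le by blast+
  then have zw: "\<bar>y - y'\<bar> - 2 / real N \<le> \<bar>z - w\<bar>" by linarith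
  have pos: "0 < \<bar>y - y'\<bar> - 2 / real N" using far by simp
  then have "ln (\<bar>y - y'\<bar> - 2 / real N) \<le> ln \<bar>z - w\<bar>"
    using zw by (subst ln_le_cancel_iff) auto
  then have "ennreal (max 0 (- ln \<bar>z - w\<bar>)) \<le> ennreal (max 0 (- ln (\<bar>y - y'\<bar> - 2 / real N)))"
    by (intro ennreal_leI) linarith
  moreover have "z \<noteq> w" using pos zw by auto
  ultimately show "log_kernel_pos z w \<le> ennreal (max 0 (- ln (\<bar>y - y'\<bar> - 2 / real N)))"
    by (simp add: log_kernel_pos_def)
qed

lemma grid_averaged_log_kernel_eq:
  assumes "i < N" "y \<in> grid_cell N i" "j < N" "y' \<in> grid_cell N j"
  shows "grid_averaged_log_kernel N (y, y') = of_nat N ^ 2 * cell_pair_energy N i j"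
proof -
  have "grid_averaged_log_kernel N (y, y') = (\<Sum>i'<N. if y \<in> grid_cell N i' then
      (\<Sum>j'<N. if y' \<in> grid_cell N j' then of_nat N ^ 2 * cell_pair_energy N i' j' else 0) else 0)"
    unfolding grid_averaged_log_kernel_def
  proof (intro sum.cong refl)
    fix i'
    show "(\<Sum>j'<N. of_nat N ^ 2 * cell_pair_energy N i' j' * indicator (grid_cell N i' \<times> grid_cell N j') (y, y')) =
      (if y \<in> grid_cell N i' then
        (\<Sum>j'<N. if y' \<in> grid_cell N j' then of_nat N ^ 2 * cell_pair_energy N i' j' else 0) else 0)"
    proof (cases "y \<in> grid_cell N i'")
      case True
      then show ?thesis by (simp only: if_True) (intro sum.cong refl, simp add: indicator_def)
    qed (simp add: indicator_def)
  qed
  also have "\<dots> = of_nat N ^ 2 * cell_pair_energy N i j"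
    using assms by (simp add: sum_grid_cells_eq)
  finally show ?thesis .
qed

lemma grid_averaged_log_kernel_outside:
  assumes "y \<notin> {0..1} \<or> y' \<notin> {0..1}"
  shows "grid_averaged_log_kernel N (y, y') = 0"
proof -
  have "(y, y') \<notin> grid_cell N i \<times> grid_cell N j" if "i < N" "j < N" for i j
    using assms grid_cell_subset_unit_interval[OF that(1)] grid_cell_subset_unit_interval[OF that(2)] by blast
  then show ?thesis unfolding grid_averaged_log_kernel_def by (simp add: sum.neutral)
qed

lemma grid_averaged_log_kernel_le_far:
  assumes N: "N \<ge> 1" and ij: "i < N" "y \<in> grid_cell N i" "j < N" "y' \<in> grid_cell N j"
    and far: "3 / real N \<le> \<bar>y - y'\<bar>"
  shows "grid_averaged_log_kernel N (y, y') \<le> log_kernel_pos y y' + ennreal (ln 3)"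
proof -
  define d where "d = \<bar>y - y'\<bar>"
  have "0 < 3 / real N" using N by simp
  then have d0: "d > 0" using far unfolding d_def by linarith
  have "2 / real N < 3 / real N" using N by (intro divide_strict_right_mono) auto
  then have "2 / real N < d" using far by (simp add: d_def)
  then have "grid_averaged_log_kernel N (y, y') \<le> ennreal (max 0 (- ln (d - 2 / real N)))"
    unfolding grid_averaged_log_kernel_eq[OF ij] d_def by (rule cell_pair_energy_le_far[OF N ij])
  also have "\<dots> \<le> ennreal (max 0 (- ln d) + ln 3)"
  proof (rule ennreal_leI)
    have "d / 3 \<le> d - 2 / real N" using far by (simp add: d_def field_simps)
    then have "ln (d / 3) \<le> ln (d - 2 / real N)"
      using d0 by (subst ln_le_cancel_iff) auto
    then have "ln d - ln 3 \<le> ln (d - 2 / real N)" using d0 by (simp add: ln_div)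
    then show "max 0 (- ln (d - 2 / real N)) \<le> max 0 (- ln d) + ln 3" by simp
  qed
  also have "\<dots> = log_kernel_pos y y' + ennreal (ln 3)"
    using d0 by (simp add: log_kernel_pos_def d_def ennreal_plus)
  finally show ?thesis .
qed

lemma grid_averaged_log_kernel_le_near:
  assumes N: "N \<ge> 1" and ij: "i < N" "y \<in> grid_cell N i" "j < N" "y' \<in> grid_cell N j"
    and "y \<noteq> y'" and near: "\<bar>y - y'\<bar> < 3 / real N"
  shows "grid_averaged_log_kernel N (y, y') \<le> log_kernel_pos y y' + ennreal (ln 3) + log_kernel_pos_integral"
proof -
  define d where "d = \<bar>y - y'\<bar>"
  have d0: "d > 0" using \<open>y \<noteq> y'\<close> by (simp add: d_def)
  have Npos: "real N > 0" using N by simp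
  have "ln d < ln (3 / real N)" using near d0 Npos by (subst ln_less_cancel_iff) (auto simp: d_def)
  then have "ln (real N) \<le> max 0 (- ln d) + ln 3" using Npos by (simp add: ln_div)
  then have "ennreal (ln (real N)) \<le> ennreal (max 0 (- ln d) + ln 3)" by (rule ennreal_leI)
  also have "\<dots> = log_kernel_pos y y' + ennreal (ln 3)"
    using \<open>y \<noteq> y'\<close> by (simp add: log_kernel_pos_def d_def ennreal_plus)
  finally have "ennreal (ln (real N)) + log_kernel_pos_integral \<le>
      log_kernel_pos y y' + ennreal (ln 3) + log_kernel_pos_integral"
    by (rule add_right_mono)
  moreover have "grid_averaged_log_kernel N (y, y') \<le> ennreal (ln (real N)) + log_kernel_pos_integral"
    unfolding grid_averaged_log_kernel_eq[OF ij] by (rule cell_pair_energy_le_near[OF N])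
  ultimately show ?thesis by (rule order_trans[rotated])
qed

lemma grid_averaged_log_kernel_le:
  assumes N: "N \<ge> 1"
  shows "grid_averaged_log_kernel N (y, y') \<le> log_kernel_pos y y' + ennreal (ln 3) + log_kernel_pos_integral"
proof (cases "y \<in> {0..1} \<and> y' \<in> {0..1} \<and> y \<noteq> y'")
  case True
  obtain i where i: "i < N" "y \<in> grid_cell N i" using grid_cell_cover[OF N, of y] True by blast
  obtain j where j: "j < N" "y' \<in> grid_cell N j" using grid_cell_cover[OF N, of y'] True by blast
  show ?thesis
  proof (cases "3 / real N \<le> \<bar>y - y'\<bar>")
    case True
    then have "grid_averaged_log_kernel N (y, y') \<le> log_kernel_pos y y' + ennreal (ln 3)"
      by (rule grid_averaged_log_kernel_le_far[OF N i j])
    then show ?thesis by (rule order_trans) simp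
  next
    case False
    then show ?thesis using True by (intro grid_averaged_log_kernel_le_near[OF N i j]) auto
  qed
next
  case False
  then show ?thesis
    using grid_averaged_log_kernel_outside[of y y' N] by (auto simp: log_kernel_pos_def)
qed

lemma limsup_grid_averaged_log_kernel_le:
  assumes "y \<noteq> y'"
  shows "limsup (\<lambda>n. grid_averaged_log_kernel (Suc n) (y, y')) \<le> log_kernel_pos y y'"
proof -
  define d where "d = \<bar>y - y'\<bar>"
  have d0: "d > 0" using assms by (simp add: d_def)
  define h where "h n = ennreal (max 0 (- ln (d - 2 / real (Suc n))))" for n
  have lim2: "(\<lambda>n. 2 / real (Suc n)) \<longlonglongrightarrow> 0"
    using LIMSEQ_Suc[OF lim_const_over_n[of 2]] by simp
  have "eventually (\<lambda>n. 2 / real (Suc n) < d) sequentially"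
    using order_tendstoD(2)[OF lim2 d0] .
  then have "eventually (\<lambda>n. grid_averaged_log_kernel (Suc n) (y, y') \<le> h n) sequentially"
  proof eventually_elim
    case (elim n)
    show ?case
    proof (cases "y \<in> {0..1} \<and> y' \<in> {0..1}")
      case True
      have N: "Suc n \<ge> 1" by simp
      obtain i where i: "i < Suc n" "y \<in> grid_cell (Suc n) i" using grid_cell_cover[OF N, of y] True by blast
      obtain j where j: "j < Suc n" "y' \<in> grid_cell (Suc n) j" using grid_cell_cover[OF N, of y'] True by blast
      note ij = i j
      show ?thesis unfolding grid_averaged_log_kernel_eq[OF ij] h_def d_def
        using cell_pair_energy_le_far[OF _ ij] elim by (simp add: d_def)
    qed (use grid_averaged_log_kernel_outside in auto)
  qed
  then have "limsup (\<lambda>n. grid_averaged_log_kernel (Suc n) (y, y')) \<le> limsup h" by (rule Limsup_mono)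
  also have "(\<lambda>n. d - 2 / real (Suc n)) \<longlonglongrightarrow> d"
    using tendsto_diff[OF tendsto_const lim2, of d] by simp
  then have "h \<longlonglongrightarrow> ennreal (max 0 (- ln d))"
    unfolding h_def using d0 by (intro tendsto_intros) auto
  then have "limsup h = ennreal (max 0 (- ln d))" by (intro lim_imp_Limsup) auto
  also have "\<dots> = log_kernel_pos y y'" using assms by (simp add: log_kernel_pos_def d_def)
  finally show ?thesis .
qed

lemma histogram_pos_log_energy_approx:
  assumes "prob_space \<mu>" and sets: "sets \<mu> = sets borel" and AE: "AE x in \<mu>. x \<in> {0..1}"
    and fin: "pos_log_energy \<mu> < \<infinity>" and "\<delta> > 0"
  obtains N where "N \<ge> 1" "pos_log_energy (histogram \<mu> N) < pos_log_energy \<mu> + ennreal \<delta>"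
proof -
  interpret prob_space \<mu> by fact
  interpret pair_prob_space \<mu> \<mu> by unfold_locales
  note kernel_meas = borel_measurable_log_kernel_pos_pair_measure[OF sets sets]
  define W where "W p = log_kernel_pos (fst p) (snd p) + ennreal (ln 3) + log_kernel_pos_integral" for p
  have "(\<integral>\<^sup>+p. W p \<partial>(\<mu> \<Otimes>\<^sub>M \<mu>)) = pos_log_energy \<mu> + ennreal (ln 3) + log_kernel_pos_integral"
    unfolding W_def pos_log_energy_pair_measure[OF assms(1) sets] using kernel_meas
    by (simp add: nn_integral_add emeasure_space_1)
  then have W_fin: "(\<integral>\<^sup>+p. W p \<partial>(\<mu> \<Otimes>\<^sub>M \<mu>)) < \<infinity>"
    using fin log_kernel_pos_integral_finite by (simp add: ennreal_add_less_top)
  have "limsup (\<lambda>n. \<integral>\<^sup>+p. grid_averaged_log_kernel (Suc n) p \<partial>(\<mu> \<Otimes>\<^sub>M \<mu>))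
      \<le> (\<integral>\<^sup>+p. limsup (\<lambda>n. grid_averaged_log_kernel (Suc n) p) \<partial>(\<mu> \<Otimes>\<^sub>M \<mu>))"
  proof (rule nn_integral_limsup[OF borel_measurable_grid_averaged_log_kernel[OF sets sets] _ _ W_fin])
    show "W \<in> borel_measurable (\<mu> \<Otimes>\<^sub>M \<mu>)" unfolding W_def using kernel_meas by measurable
    show "AE p in \<mu> \<Otimes>\<^sub>M \<mu>. grid_averaged_log_kernel (Suc n) p \<le> W p" for n
      using grid_averaged_log_kernel_le[of "Suc n"] by (intro AE_I2) (auto simp: W_def split: prod.splits)
  qed
  also have "\<dots> \<le> (\<integral>\<^sup>+p. log_kernel_pos (fst p) (snd p) \<partial>(\<mu> \<Otimes>\<^sub>M \<mu>))"
  proof (rule nn_integral_mono)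
    fix p :: "real \<times> real"
    show "limsup (\<lambda>n. grid_averaged_log_kernel (Suc n) p) \<le> log_kernel_pos (fst p) (snd p)"
      using limsup_grid_averaged_log_kernel_le[of "fst p" "snd p"]
      by (cases "fst p = snd p") (simp_all add: log_kernel_pos_def)
  qed
  also have "\<dots> = pos_log_energy \<mu>" by (rule pos_log_energy_pair_measure[OF assms(1) sets, symmetric])
  also have "pos_log_energy \<mu> < pos_log_energy \<mu> + ennreal \<delta>"
    using fin \<open>\<delta> > 0\<close> ennreal_add_left_cancel_less[of "pos_log_energy \<mu>" 0 "ennreal \<delta>"] by simp
  finally have "eventually (\<lambda>n. (\<integral>\<^sup>+p. grid_averaged_log_kernel (Suc n) p \<partial>(\<mu> \<Otimes>\<^sub>M \<mu>)) <
      pos_log_energy \<mu> + ennreal \<delta>) sequentially"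
    by (rule Limsup_lessD)
  then obtain n where n: "(\<integral>\<^sup>+p. grid_averaged_log_kernel (Suc n) p \<partial>(\<mu> \<Otimes>\<^sub>M \<mu>)) < pos_log_energy \<mu> + ennreal \<delta>"
    by (auto simp: eventually_sequentially)
  have "prob_space (histogram \<mu> (Suc n))" by (rule prob_space_histogram) (use assms in auto)
  then have "pos_log_energy (histogram \<mu> (Suc n)) = (\<integral>\<^sup>+p. grid_averaged_log_kernel (Suc n) p \<partial>(\<mu> \<Otimes>\<^sub>M \<mu>))"
    by (simp add: pos_log_energy_histogram nn_integral_grid_averaged_log_kernel[OF assms(1) sets])
  then show ?thesis using n by (intro that[of "Suc n"]) simp_all
qed

section \<open>Re-distribution and passage to the limit\<close>

lemma limsup_intervals_subset_unit_interval:
  fixes c l :: "nat \<Rightarrow> real"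
  assumes c: "\<And>k. k \<ge> 1 \<Longrightarrow> c k \<in> {0<..<1}" and l: "l \<longlonglongrightarrow> 0"
  shows "(\<Inter>m\<in>{1..}. \<Union>k\<in>{m..}. {c k - l k / 2 <..< c k + l k / 2}) \<subseteq> {0..1}"
proof
  fix x assume x: "x \<in> (\<Inter>m\<in>{1..}. \<Union>k\<in>{m..}. {c k - l k / 2 <..< c k + l k / 2})"
  show "x \<in> {0..1}"
  proof (rule ccontr)
    assume "x \<notin> {0..1}"
    define d where "d = (if x < 0 then - x else x - 1)"
    have "0 < d" using \<open>x \<notin> {0..1}\<close> by (auto simp: d_def)
    from LIMSEQ_D[OF l this] obtain m where m: "\<forall>k\<ge>m. norm (l k - 0) < d" ..
    have "x \<in> (\<Union>k\<in>{max m 1..}. {c k - l k / 2 <..< c k + l k / 2})"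
      using INT_D[OF x, of "max m 1"] by simp
    then obtain k where k: "k \<ge> max m 1" "x \<in> {c k - l k / 2 <..< c k + l k / 2}"
      by blast
    then have "\<bar>l k\<bar> < d" "0 < c k" "c k < 1"
      using m c[of k] by auto
    with k(2) \<open>x \<notin> {0..1}\<close> show False by (cases "x < 0") (auto simp: d_def abs_less_iff)
  qed
qed

lemma redistributable_pos_log_energy:
  assumes "redistributable I" "prob_space \<nu>" "has_pc_density \<nu>" "measure_support \<nu> \<subseteq> {0..1}"
    and "\<epsilon> > 0" "m \<ge> 1"
  obtains \<nu>' where "prob_space \<nu>'" "has_pc_density \<nu>'"
    "pos_log_energy \<nu>' \<le> pos_log_energy \<nu> + ennreal \<epsilon>"
    "measure_support \<nu>' \<subseteq> measure_support \<nu> \<inter> (\<Union>k\<in>{m..}. I k)"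
proof -
  have "\<exists>F. finite F \<and> (\<forall>A\<in>F. is_interval A \<and> A \<subseteq> {0..1}) \<and> measure_support \<nu> \<subseteq> \<Union>F"
    using assms(4) by (intro exI[of _ "{{0..1}}"]) auto
  with assms(2,3,5,6) have "prob_space \<nu> \<and> has_pc_density \<nu> \<and>
      (\<exists>F. finite F \<and> (\<forall>A\<in>F. is_interval A \<and> A \<subseteq> {0..1}) \<and> measure_support \<nu> \<subseteq> \<Union>F) \<and>
      \<epsilon> > 0 \<and> m \<ge> 1"
    by blast
  from assms(1)[unfolded redistributable_def, rule_format, OF this]
  obtain \<nu>' n K where \<nu>': "prob_space \<nu>'" "has_pc_density \<nu>'"
      "log_energy \<nu>' < log_energy \<nu> + ereal \<epsilon>" and "n \<ge> m" "K \<subseteq> {n..}"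
      and supp: "measure_support \<nu>' \<subseteq> measure_support \<nu> \<inter> (\<Union>k\<in>K. I k)"
    by blast
  have sets: "sets \<nu> = sets borel" "sets \<nu>' = sets borel"
    using assms(3) \<nu>'(2) by (auto simp: has_pc_density_def)
  have "log_energy \<nu>' = enn2ereal (pos_log_energy \<nu>')" "log_energy \<nu> = enn2ereal (pos_log_energy \<nu>)"
    using supp assms(4) by (auto intro!: log_energy_eq_pos_log_energy sets)
  then have "enn2ereal (pos_log_energy \<nu>') < enn2ereal (pos_log_energy \<nu> + ennreal \<epsilon>)"
    using \<nu>'(3) \<open>\<epsilon> > 0\<close> by (simp add: plus_ennreal.rep_eq enn2ereal_ennreal)
  then have "pos_log_energy \<nu>' \<le> pos_log_energy \<nu> + ennreal \<epsilon>"
    by (subst (asm) less_ennreal.rep_eq[symmetric]) (rule less_imp_le)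
  moreover have "measure_support \<nu>' \<subseteq> measure_support \<nu> \<inter> (\<Union>k\<in>{m..}. I k)"
  proof -
    have "(\<Union>k\<in>K. I k) \<subseteq> (\<Union>k\<in>{m..}. I k)"
      using \<open>n \<ge> m\<close> \<open>K \<subseteq> {n..}\<close> by (intro UN_mono) auto
    then have "measure_support \<nu> \<inter> (\<Union>k\<in>K. I k) \<subseteq> measure_support \<nu> \<inter> (\<Union>k\<in>{m..}. I k)"
      by (rule Int_mono[OF order_refl])
    with supp show ?thesis by (rule order_trans)
  qed
  ultimately show ?thesis by (rule that[OF \<nu>'(1,2)])
qed

lemma ennreal_diff_divide_power2_add:
  fixes \<delta> :: real
  assumes "\<delta> \<ge> 0"
  shows "ennreal (\<delta> - \<delta> / 2 ^ j) + ennreal (\<delta> / 2 ^ Suc j) = ennreal (\<delta> - \<delta> / 2 ^ Suc j)"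
proof -
  have "\<delta> / 2 ^ j \<le> \<delta> / 1" using assms by (intro divide_left_mono) auto
  then show ?thesis using assms by (subst ennreal_plus[symmetric]) (auto simp: field_simps)
qed

lemma redistributed_sequence:
  assumes redist: "redistributable I" and \<nu>0: "prob_space \<nu>0" "has_pc_density \<nu>0" "measure_support \<nu>0 \<subseteq> {0..1}"
    and "\<delta> > 0"
  obtains \<nu> where "\<And>j. real_distribution (\<nu> j)" "\<And>j. measure_support (\<nu> j) \<subseteq> {0..1}"
    "\<And>j. pos_log_energy (\<nu> j) \<le> pos_log_energy \<nu>0 + ennreal \<delta>"
    "decseq (\<lambda>j. measure_support (\<nu> j))" "\<And>j. j \<ge> 1 \<Longrightarrow> measure_support (\<nu> j) \<subseteq> (\<Union>k\<in>{j..}. I k)"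
proof -
  define P where "P j \<nu> \<longleftrightarrow> prob_space \<nu> \<and> has_pc_density \<nu> \<and> measure_support \<nu> \<subseteq> {0..1} \<and>
    pos_log_energy \<nu> \<le> pos_log_energy \<nu>0 + ennreal (\<delta> - \<delta> / 2 ^ j)" for j \<nu>
  define Q where "Q j \<nu> \<nu>' \<longleftrightarrow> measure_support \<nu>' \<subseteq> measure_support \<nu> \<inter> (\<Union>k\<in>{Suc j..}. I k)" for j \<nu> \<nu>'
  have "\<exists>\<nu>. \<forall>j. P j (\<nu> j) \<and> Q j (\<nu> j) (\<nu> (Suc j))"
  proof (rule dependent_nat_choice)
    show "\<exists>\<nu>. P 0 \<nu>" using \<nu>0 by (auto simp: P_def)
  next
    fix \<nu> j assume P: "P j \<nu>"
    obtain \<nu>' where \<nu>': "prob_space \<nu>'" "has_pc_density \<nu>'"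
      "pos_log_energy \<nu>' \<le> pos_log_energy \<nu> + ennreal (\<delta> / 2 ^ Suc j)"
      "measure_support \<nu>' \<subseteq> measure_support \<nu> \<inter> (\<Union>k\<in>{Suc j..}. I k)"
      by (rule redistributable_pos_log_energy[OF redist, of \<nu> "\<delta> / 2 ^ Suc j" "Suc j"])
         (use P \<open>\<delta> > 0\<close> in \<open>auto simp: P_def\<close>)
    note \<nu>'(3)
    also have "pos_log_energy \<nu> + ennreal (\<delta> / 2 ^ Suc j) \<le>
        pos_log_energy \<nu>0 + ennreal (\<delta> - \<delta> / 2 ^ j) + ennreal (\<delta> / 2 ^ Suc j)"
      using P by (intro add_right_mono) (simp add: P_def)
    also have "\<dots> = pos_log_energy \<nu>0 + ennreal (\<delta> - \<delta> / 2 ^ Suc j)"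
      using \<open>\<delta> > 0\<close> by (simp only: add.assoc ennreal_diff_divide_power2_add less_imp_le)
    finally have "pos_log_energy \<nu>' \<le> pos_log_energy \<nu>0 + ennreal (\<delta> - \<delta> / 2 ^ Suc j)" .
    moreover have "measure_support \<nu>' \<subseteq> {0..1}" using \<nu>'(4) P by (auto simp: P_def)
    ultimately show "\<exists>\<nu>'. P (Suc j) \<nu>' \<and> Q j \<nu> \<nu>'"
      using \<nu>'(1,2,4) unfolding P_def Q_def by (intro exI[of _ \<nu>']) simp
  qed
  then obtain \<nu> where \<nu>: "\<And>j. P j (\<nu> j)" "\<And>j. Q j (\<nu> j) (\<nu> (Suc j))" by blast
  show ?thesis
  proof (rule that)
    show "real_distribution (\<nu> j)" for j
      using \<nu>(1)[of j] by (auto simp: P_def real_distribution_iff has_pc_density_def)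
    show "measure_support (\<nu> j) \<subseteq> {0..1}" for j using \<nu>(1)[of j] by (simp add: P_def)
    show "pos_log_energy (\<nu> j) \<le> pos_log_energy \<nu>0 + ennreal \<delta>" for j
    proof -
      have "pos_log_energy \<nu>0 + ennreal (\<delta> - \<delta> / 2 ^ j) \<le> pos_log_energy \<nu>0 + ennreal \<delta>"
        using \<open>\<delta> > 0\<close> by (intro add_left_mono ennreal_leI) simp
      with \<nu>(1)[of j] show ?thesis unfolding P_def by (blast intro: order_trans)
    qed
    show "decseq (\<lambda>j. measure_support (\<nu> j))"
      using \<nu>(2) by (intro decseq_SucI) (auto simp: Q_def)
    show "measure_support (\<nu> j) \<subseteq> (\<Union>k\<in>{j..}. I k)" if "j \<ge> 1" for j
      using \<nu>(2)[of "j - 1"] that by (auto simp: Q_def)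
  qed
qed

lemma weak_limit_nested_supports:
  assumes \<nu>: "\<And>j. real_distribution (\<nu> j)" and supp: "\<And>j. measure_support (\<nu> j) \<subseteq> {a..b}"
    and dec: "decseq (\<lambda>j. measure_support (\<nu> j))" and B: "\<And>j. pos_log_energy (\<nu> j) \<le> B"
  obtains \<mu> where "real_distribution \<mu>" "measure_support \<mu> \<subseteq> (\<Inter>j. measure_support (\<nu> j))"
    "pos_log_energy \<mu> \<le> B"
proof -
  have "\<exists>r \<mu>. strict_mono r \<and> real_distribution \<mu> \<and> weak_conv_m (\<nu> \<circ> id \<circ> r) \<mu>"
    by (rule tight_imp_convergent_subsubsequence[OF tight_if_measure_support_subset[OF \<nu> supp] strict_mono_id])
  then obtain r \<mu> where r: "strict_mono r" and \<mu>: "real_distribution \<mu>" and conv: "weak_conv_m (\<nu> \<circ> r) \<mu>"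
    by auto
  have \<nu>r: "real_distribution ((\<nu> \<circ> r) n)" for n using \<nu> by simp
  have "measure_support \<mu> \<subseteq> measure_support (\<nu> j)" for j
  proof (rule measure_support_weak_limit_subset[OF \<nu>r \<mu> conv])
    show "closed (measure_support (\<nu> j))"
      using \<nu>[of j] by (intro closed_measure_support) (simp add: real_distribution_iff)
    show "eventually (\<lambda>n. measure_support ((\<nu> \<circ> r) n) \<subseteq> measure_support (\<nu> j)) sequentially"
      unfolding eventually_sequentially
      using dec seq_suble[OF r] by (auto intro!: exI[of _ j] dest: decseqD intro: le_trans)
  qed
  moreover have "pos_log_energy \<mu> \<le> B"
    by (rule pos_log_energy_le_of_weak_conv[OF \<nu>r \<mu> conv]) (simp add: B)
  ultimately show ?thesis using that \<mu> by blast
qed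

lemma log_capacity_eq_if_pos_log_energy_approx:
  assumes "A \<subseteq> B" "B \<subseteq> {0..1}"
    and approx: "\<And>\<mu> \<delta>. \<mu> \<in> admissible_measures B \<Longrightarrow> pos_log_energy \<mu> < \<infinity> \<Longrightarrow> \<delta> > 0 \<Longrightarrow>
      \<exists>\<mu>'\<in>admissible_measures A. pos_log_energy \<mu>' \<le> pos_log_energy \<mu> + ennreal \<delta>"
  shows "log_capacity A = log_capacity B"
proof -
  have adm: "admissible_measures A \<subseteq> admissible_measures B"
    using assms(1) by (auto simp: admissible_measures_def)
  have energy: "log_energy \<mu> = enn2ereal (pos_log_energy \<mu>)" if "\<mu> \<in> admissible_measures B" for \<mu>
    using that assms(2) unfolding admissible_measures_def by (intro log_energy_eq_pos_log_energy) auto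
  have "(INF \<mu> \<in> admissible_measures A. log_energy \<mu>) \<le> log_energy \<mu>" if \<mu>: "\<mu> \<in> admissible_measures B" for \<mu>
  proof (cases "pos_log_energy \<mu> = \<infinity>")
    case False
    show ?thesis
    proof (rule ereal_le_epsilon2)
      fix e :: real assume "e > 0"
      then obtain \<mu>' where \<mu>': "\<mu>' \<in> admissible_measures A" "pos_log_energy \<mu>' \<le> pos_log_energy \<mu> + ennreal e"
        using approx[OF \<mu>] False by (auto simp: top.not_eq_extremum)
      have "(INF \<mu> \<in> admissible_measures A. log_energy \<mu>) \<le> log_energy \<mu>'"
        using \<mu>'(1) by (rule INF_lower)
      also have "\<dots> \<le> enn2ereal (pos_log_energy \<mu> + ennreal e)"
        using \<mu>' adm energy by (auto simp: less_eq_ennreal.rep_eq[symmetric])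
      also have "\<dots> = log_energy \<mu> + ereal e"
        using \<open>e > 0\<close> energy[OF \<mu>] by (simp add: plus_ennreal.rep_eq enn2ereal_ennreal)
      finally show "(INF \<mu> \<in> admissible_measures A. log_energy \<mu>) \<le> log_energy \<mu> + ereal e" .
    qed
  qed (simp add: energy[OF \<mu>])
  then have "(INF \<mu> \<in> admissible_measures A. log_energy \<mu>) = (INF \<mu> \<in> admissible_measures B. log_energy \<mu>)"
    using adm by (intro antisym INF_greatest INF_superset_mono) auto
  then show ?thesis unfolding log_capacity_def by simp
qed

lemma admissible_limsup_set_pos_log_energy_le:
  assumes redist: "redistributable I" and S: "S = (\<Inter>m\<in>{1..}. \<Union>k\<in>{m..}. I k)" "S \<subseteq> {0..1}"
    and \<nu>0: "prob_space \<nu>0" "has_pc_density \<nu>0" "measure_support \<nu>0 \<subseteq> {0..1}" and "\<delta> > 0"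
  shows "\<exists>\<mu>\<in>admissible_measures S. pos_log_energy \<mu> \<le> pos_log_energy \<nu>0 + ennreal \<delta>"
proof -
  obtain \<nu> where \<nu>: "\<And>j. real_distribution (\<nu> j)" "\<And>j. measure_support (\<nu> j) \<subseteq> {0..1}"
    "\<And>j. pos_log_energy (\<nu> j) \<le> pos_log_energy \<nu>0 + ennreal \<delta>"
    "decseq (\<lambda>j. measure_support (\<nu> j))" "\<And>j. j \<ge> 1 \<Longrightarrow> measure_support (\<nu> j) \<subseteq> (\<Union>k\<in>{j..}. I k)"
    using redistributed_sequence[OF redist \<nu>0 \<open>\<delta> > 0\<close>] by blast
  obtain \<mu> where \<mu>: "real_distribution \<mu>" "measure_support \<mu> \<subseteq> (\<Inter>j. measure_support (\<nu> j))"
    "pos_log_energy \<mu> \<le> pos_log_energy \<nu>0 + ennreal \<delta>"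
    by (rule weak_limit_nested_supports[OF \<nu>(1,2,4,3)])
  have "measure_support \<mu> \<subseteq> S"
    unfolding S(1) using \<mu>(2) \<nu>(5) by blast
  moreover have "compact (measure_support \<mu>)"
    using calculation S(2) closed_measure_support[of \<mu>] \<mu>(1)
    by (auto simp: compact_eq_bounded_closed real_distribution_iff intro: bounded_subset[OF bounded_closed_interval])
  ultimately have "\<mu> \<in> admissible_measures S"
    using \<mu>(1) by (auto simp: admissible_measures_def real_distribution_iff)
  with \<mu>(3) show ?thesis by blast
qed

lemma admissible_limsup_set_pos_log_energy_approx:
  assumes redist: "redistributable I" and S: "S = (\<Inter>m\<in>{1..}. \<Union>k\<in>{m..}. I k)" "S \<subseteq> {0..1}"
    and \<mu>: "\<mu> \<in> admissible_measures {0..1}" "pos_log_energy \<mu> < \<infinity>" and "\<delta> > 0"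
  shows "\<exists>\<mu>'\<in>admissible_measures S. pos_log_energy \<mu>' \<le> pos_log_energy \<mu> + ennreal \<delta>"
proof -
  have \<mu>_prob: "prob_space \<mu>" "sets \<mu> = sets borel" and "AE x in \<mu>. x \<in> {0..1}"
    using \<mu>(1) AE_measure_support_subset[of \<mu> "{0..1}"] by (auto simp: admissible_measures_def)
  then obtain N where "N \<ge> 1" and N: "pos_log_energy (histogram \<mu> N) < pos_log_energy \<mu> + ennreal (\<delta> / 2)"
    using histogram_pos_log_energy_approx[OF _ _ _ \<mu>(2), of "\<delta> / 2"] \<open>\<delta> > 0\<close> by auto
  have "prob_space (histogram \<mu> N)"
    by (rule prob_space_histogram) (use \<open>N \<ge> 1\<close> \<mu>_prob \<open>AE x in \<mu>. x \<in> {0..1}\<close> in auto)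
  then obtain \<mu>' where "\<mu>' \<in> admissible_measures S"
    and \<mu>': "pos_log_energy \<mu>' \<le> pos_log_energy (histogram \<mu> N) + ennreal (\<delta> / 2)"
    using admissible_limsup_set_pos_log_energy_le[OF redist S _ has_pc_density_histogram measure_support_histogram,
        where \<delta>="\<delta> / 2"] \<open>\<delta> > 0\<close> by auto
  moreover have "pos_log_energy \<mu>' \<le> pos_log_energy \<mu> + ennreal \<delta>"
  proof -
    note \<mu>'
    also have "pos_log_energy (histogram \<mu> N) + ennreal (\<delta> / 2) \<le> pos_log_energy \<mu> + ennreal (\<delta> / 2) + ennreal (\<delta> / 2)"
      using N by (intro add_right_mono less_imp_le)
    also have "\<dots> = pos_log_energy \<mu> + ennreal \<delta>"
      using \<open>\<delta> > 0\<close> by (simp add: add.assoc ennreal_plus[symmetric] del: ennreal_plus)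
    finally show ?thesis .
  qed
  ultimately show ?thesis by blast
qed

theorem proposition3p2:
  fixes c l :: "nat \<Rightarrow> real" and I :: "nat \<Rightarrow> real set" and S :: "real set"
  assumes c_in: "\<And>k. k \<ge> 1 \<Longrightarrow> c k \<in> {0<..<1}"
    and l_pos: "\<And>k. k \<ge> 1 \<Longrightarrow> l k > 0"
    and l_lim: "l \<longlonglongrightarrow> 0"
    and I_def: "\<And>k. I k = {c k - l k / 2 <..< c k + l k / 2}"
    and S_def: "S = (\<Inter>m\<in>{1..}. \<Union>k\<in>{m..}. I k)"
    and redist: "redistributable I"
  shows "log_capacity S = log_capacity {0..1}"
proof -
  have S01: "S \<subseteq> {0..1}"
    using limsup_intervals_subset_unit_interval[OF c_in l_lim] by (simp add: S_def I_def)
  show ?thesis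
  proof (rule log_capacity_eq_if_pos_log_energy_approx[OF S01 order_refl])
    fix \<mu> \<delta> assume "\<mu> \<in> admissible_measures {0..1}" "pos_log_energy \<mu> < \<infinity>" "(\<delta>::real) > 0"
    from admissible_limsup_set_pos_log_energy_approx[OF redist S_def S01 this]
    show "\<exists>\<mu>'\<in>admissible_measures S. pos_log_energy \<mu>' \<le> pos_log_energy \<mu> + ennreal \<delta>" .
  qed
qed

end
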